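(* Let $\Sigma=(V,E)$ be a finite directed network in which every edge has capacity $1$, which is inner-superbalanced, and whose boundary is partitioned as $\partial\Sigma=A\sqcup B\sqcup C\sqcup D$. Then $$-I_3(A:B:C):=S(AB)+S(AC)+S(BC)-S(A)-S(B)-S(C)-S(ABC)\ \ge\ 0.$$
   Context: A flow on a directed network with capacities $c$ is a function $v:E\to\mathbb R_{\ge0}$ with $v^e\le c^e$ and, at every non-boundary vertex $x$, total inflow equal to total outflow. The flux of $v$ out of a boundary set $X\subset\partial\Sigma$ is $\sum_{e:s(e)\in X}v^e-\sum_{e:t(e)\in X}v^e$, where $s(e),t(e)$ are the source and target of $e$; $S(X)$ is the maximum flux out of $X$ over all flows, and juxtaposition such as $AB$ denotes the union $A\cup B$. A network is inner-superbalanced if at each non-boundary vertex the total capacity of incoming edges is at most that of outgoing edges. *)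

theory Defs
  imports Complex_Main
begin

text \<open>A directed network: vertex set V, edge set E (parallel edges allowed, since edges are
abstract objects), source map s, target map t, boundary Bd \<subseteq> V, capacity c.\<close>

definition is_flow ::
  "'v set \<Rightarrow> 'e set \<Rightarrow> ('e \<Rightarrow> 'v) \<Rightarrow> ('e \<Rightarrow> 'v) \<Rightarrow> 'v set \<Rightarrow> ('e \<Rightarrow> real) \<Rightarrow> ('e \<Rightarrow> real) \<Rightarrow> bool"
  where "is_flow V E s t Bd c f \<longleftrightarrow>
     (\<forall>e\<in>E. 0 \<le> f e \<and> f e \<le> c e) \<and>
     (\<forall>x\<in>V - Bd. (\<Sum>e\<in>{e\<in>E. t e = x}. f e) = (\<Sum>e\<in>{e\<in>E. s e = x}. f e))"

definition flux :: "'e set \<Rightarrow> ('e \<Rightarrow> 'v) \<Rightarrow> ('e \<Rightarrow> 'v) \<Rightarrow> ('e \<Rightarrow> real) \<Rightarrow> 'v set \<Rightarrow> real"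
  where "flux E s t f X = (\<Sum>e\<in>{e\<in>E. s e \<in> X}. f e) - (\<Sum>e\<in>{e\<in>E. t e \<in> X}. f e)"

text \<open>Maximum flux out of X over all flows (a maximum exists for finite networks; Sup of the
nonempty bounded set of achievable fluxes).\<close>
definition max_flux ::
  "'v set \<Rightarrow> 'e set \<Rightarrow> ('e \<Rightarrow> 'v) \<Rightarrow> ('e \<Rightarrow> 'v) \<Rightarrow> 'v set \<Rightarrow> ('e \<Rightarrow> real) \<Rightarrow> 'v set \<Rightarrow> real"
  where "max_flux V E s t Bd c X = Sup {flux E s t f X | f. is_flow V E s t Bd c f}"

definition inner_superbalanced ::
  "'v set \<Rightarrow> 'e set \<Rightarrow> ('e \<Rightarrow> 'v) \<Rightarrow> ('e \<Rightarrow> 'v) \<Rightarrow> 'v set \<Rightarrow> ('e \<Rightarrow> real) \<Rightarrow> bool"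
  where "inner_superbalanced V E s t Bd c \<longleftrightarrow>
     (\<forall>x\<in>V - Bd. (\<Sum>e\<in>{e\<in>E. t e = x}. c e) \<le> (\<Sum>e\<in>{e\<in>E. s e = x}. c e))"

end

theory Submission
  imports Defs "HOL-Library.FuncSet"
begin

text \<open>
Every vertex set \<open>U\<close> with \<open>U \<inter> \<partial>\<Sigma> = X\<close> bounds \<open>S(X)\<close> by the capacity of the edges
leaving it. For unit capacities the bound is attained: take a 0/1 flow maximising the
flux out of \<open>X\<close>. No residual path joins \<open>X\<close> to another boundary vertex (augmenting
along it would increase the flux), so the set \<open>U\<close> of vertices residually reachable from
\<open>X\<close> has boundary trace \<open>X\<close>, and its outgoing edges are saturated while its incoming
edges carry nothing.

Take such minimal cuts \<open>U\<^sub>1, U\<^sub>2, U\<^sub>3\<close> for \<open>AB, AC, BC\<close>. Then \<open>U\<^sub>1 \<inter> U\<^sub>2 - U\<^sub>3\<close>,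
\<open>U\<^sub>1 \<inter> U\<^sub>3 - U\<^sub>2\<close>, \<open>U\<^sub>2 \<inter> U\<^sub>3 - U\<^sub>1\<close> and \<open>U\<^sub>1 \<union> U\<^sub>2 \<union> U\<^sub>3\<close> have boundary traces \<open>A, B, C, ABC\<close>,
and an edge-by-edge count shows that their capacities, plus the net capacity leaving
\<open>U\<^sub>1 \<inter> U\<^sub>2 \<inter> U\<^sub>3\<close>, add up to at most those of \<open>U\<^sub>1, U\<^sub>2, U\<^sub>3\<close>. The set \<open>U\<^sub>1 \<inter> U\<^sub>2 \<inter> U\<^sub>3\<close>
contains no boundary vertex, so inner-superbalancedness makes that net capacity nonnegative.
\<close>

definition cut_capacity :: "'e set \<Rightarrow> ('e \<Rightarrow> 'v) \<Rightarrow> ('e \<Rightarrow> 'v) \<Rightarrow> ('e \<Rightarrow> real) \<Rightarrow> 'v set \<Rightarrow> real"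
  where "cut_capacity E s t c U = (\<Sum>e\<in>{e\<in>E. s e \<in> U \<and> t e \<notin> U}. c e)"

lemma cut_capacity_eq_sum_edges:
  assumes "finite E"
  shows "cut_capacity E s t c U = (\<Sum>e\<in>E. of_bool (s e \<in> U \<and> t e \<notin> U) * c e)"
  using assms by (simp add: cut_capacity_def Int_def)

lemma flux_eq_sum_edges:
  assumes "finite E"
  shows "flux E s t f Y = (\<Sum>e\<in>E. (of_bool (s e \<in> Y) - of_bool (t e \<in> Y)) * f e)"
  using assms by (simp add: flux_def Int_def left_diff_distrib sum_subtractf)

lemma flux_eq_sum_vertex_flux:
  assumes "finite V" "finite E" "\<forall>e\<in>E. s e \<in> V \<and> t e \<in> V"
  shows "flux E s t f Y = (\<Sum>v\<in>Y \<inter> V. flux E s t f {v})"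
proof -
  have "(\<Sum>v\<in>Y \<inter> V. flux E s t f {v})
      = (\<Sum>e\<in>E. (\<Sum>v\<in>Y \<inter> V. of_bool (s e = v) - of_bool (t e = v)) * f e)"
    using assms(2) by (simp add: flux_eq_sum_edges sum.swap[of _ "Y \<inter> V"] sum_distrib_right)
  also have "\<dots> = flux E s t f Y"
    using assms by (simp add: flux_eq_sum_edges sum_subtractf of_bool_def)
  finally show ?thesis ..
qed

lemma is_flow_iff_vertex_flux:
  "is_flow V E s t Bd c f \<longleftrightarrow>
    (\<forall>e\<in>E. 0 \<le> f e \<and> f e \<le> c e) \<and> (\<forall>x\<in>V - Bd. flux E s t f {x} = 0)"
  unfolding is_flow_def flux_def by auto

lemma flow_flux_inter_boundary:
  assumes "finite V" "finite E" "\<forall>e\<in>E. s e \<in> V \<and> t e \<in> V"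
    and "is_flow V E s t Bd c f"
  shows "flux E s t f U = flux E s t f (U \<inter> Bd)"
proof -
  have "(\<Sum>v\<in>U \<inter> V. flux E s t f {v}) = (\<Sum>v\<in>(U \<inter> Bd) \<inter> V. flux E s t f {v})"
    using assms(1,4) by (intro sum.mono_neutral_right) (auto simp: is_flow_iff_vertex_flux)
  then show ?thesis
    using flux_eq_sum_vertex_flux[OF assms(1-3)] by metis
qed

lemma flow_flux_le_cut_capacity:
  assumes "finite V" "finite E" "\<forall>e\<in>E. s e \<in> V \<and> t e \<in> V"
    and "is_flow V E s t Bd c f" and "U \<inter> Bd = X"
  shows "flux E s t f X \<le> cut_capacity E s t c U"
proof -
  have "flux E s t f X = flux E s t f U"
    using flow_flux_inter_boundary[OF assms(1-4), of U] assms(5) by simp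
  also have "\<dots> = (\<Sum>e\<in>E. (of_bool (s e \<in> U) - of_bool (t e \<in> U)) * f e)"
    using assms(2) by (rule flux_eq_sum_edges)
  also have "\<dots> \<le> (\<Sum>e\<in>E. of_bool (s e \<in> U \<and> t e \<notin> U) * c e)"
    using assms(4) by (intro sum_mono) (auto simp: is_flow_def)
  also have "\<dots> = cut_capacity E s t c U"
    using assms(2) by (rule cut_capacity_eq_sum_edges[symmetric])
  finally show ?thesis .
qed

lemma max_flux_le_cut_capacity:
  assumes "finite V" "finite E" "\<forall>e\<in>E. s e \<in> V \<and> t e \<in> V"
    and "\<forall>e\<in>E. 0 \<le> c e" and "U \<inter> Bd = X"
  shows "max_flux V E s t Bd c X \<le> cut_capacity E s t c U"
proof -
  have "is_flow V E s t Bd c (\<lambda>_. 0)"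
    using assms(4) by (simp add: is_flow_def)
  moreover have "flux E s t f X \<le> cut_capacity E s t c U" if "is_flow V E s t Bd c f" for f
    using flow_flux_le_cut_capacity[OF assms(1-3) that assms(5)] .
  ultimately show ?thesis
    unfolding max_flux_def by (intro cSup_least) blast+
qed

lemma flow_flux_le_max_flux:
  assumes "finite V" "finite E" "\<forall>e\<in>E. s e \<in> V \<and> t e \<in> V"
    and "is_flow V E s t Bd c f" and "X \<subseteq> Bd"
  shows "flux E s t f X \<le> max_flux V E s t Bd c X"
proof -
  have "X \<inter> Bd = X"
    using assms(5) by blast
  then have "flux E s t g X \<le> cut_capacity E s t c X" if "is_flow V E s t Bd c g" for g
    using flow_flux_le_cut_capacity[OF assms(1-3) that] by blast
  then have "bdd_above {flux E s t g X | g. is_flow V E s t Bd c g}"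
    by (auto intro!: bdd_aboveI[of _ "cut_capacity E s t c X"])
  then show ?thesis
    unfolding max_flux_def using assms(4) by (intro cSup_upper) auto
qed

lemma inner_superbalanced_flux_nonneg:
  assumes "finite V" "finite E" "\<forall>e\<in>E. s e \<in> V \<and> t e \<in> V"
    and "inner_superbalanced V E s t Bd c" and "T \<inter> Bd = {}"
  shows "0 \<le> flux E s t c T"
proof -
  have "0 \<le> flux E s t c {v}" if "v \<in> T \<inter> V" for v
    using that assms(4,5) unfolding inner_superbalanced_def flux_def by auto
  then show ?thesis
    unfolding flux_eq_sum_vertex_flux[OF assms(1-3), of c T] by (rule sum_nonneg)
qed

definition residual_tail :: "('e \<Rightarrow> real) \<Rightarrow> ('e \<Rightarrow> 'v) \<Rightarrow> ('e \<Rightarrow> 'v) \<Rightarrow> 'e \<Rightarrow> 'v"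
  where "residual_tail f s t e = (if f e = 0 then s e else t e)"

definition residual_head :: "('e \<Rightarrow> real) \<Rightarrow> ('e \<Rightarrow> 'v) \<Rightarrow> ('e \<Rightarrow> 'v) \<Rightarrow> 'e \<Rightarrow> 'v"
  where "residual_head f s t e = (if f e = 0 then t e else s e)"

fun residual_walk ::
  "'e set \<Rightarrow> ('e \<Rightarrow> real) \<Rightarrow> ('e \<Rightarrow> 'v) \<Rightarrow> ('e \<Rightarrow> 'v) \<Rightarrow> 'v \<Rightarrow> 'e list \<Rightarrow> 'v \<Rightarrow> bool"
  where
    "residual_walk E f s t u [] w \<longleftrightarrow> u = w"
  | "residual_walk E f s t u (e # es) w \<longleftrightarrow>
      e \<in> E \<and> residual_tail f s t e = u \<and> residual_walk E f s t (residual_head f s t e) es w"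

definition augment :: "'e list \<Rightarrow> ('e \<Rightarrow> real) \<Rightarrow> 'e \<Rightarrow> real"
  where "augment es f e = (if e \<in> set es then 1 - f e else f e)"

lemma residual_walk_append:
  "residual_walk E f s t u (xs @ ys) w \<longleftrightarrow>
    (\<exists>m. residual_walk E f s t u xs m \<and> residual_walk E f s t m ys w)"
  by (induction xs arbitrary: u) auto

lemma residual_walk_edges_subset: "residual_walk E f s t u es w \<Longrightarrow> set es \<subseteq> E"
  by (induction es arbitrary: u) auto

lemma residual_walk_telescope:
  assumes "residual_walk E f s t u es w"
  shows "(\<Sum>e\<leftarrow>es. of_bool (residual_tail f s t e \<in> Y) - of_bool (residual_head f s t e \<in> Y))
    = (of_bool (u \<in> Y) - of_bool (w \<in> Y) :: real)"
  using assms by (induction es arbitrary: u) auto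

lemma rtrancl_residual_imp_distinct_walk:
  assumes "(x, y) \<in> {(residual_tail f s t e, residual_head f s t e) | e. e \<in> E}\<^sup>*"
  shows "\<exists>es. distinct es \<and> residual_walk E f s t x es y"
  using assms
proof (induction rule: rtrancl_induct)
  case base
  then show ?case by (intro exI[of _ "[]"]) simp
next
  case (step u w)
  from step.IH obtain es where es: "distinct es" "residual_walk E f s t x es u" by blast
  from step.hyps(2) obtain e where e: "e \<in> E" "u = residual_tail f s t e" "w = residual_head f s t e"
    by blast
  show ?case
  proof (cases "e \<in> set es")
    case True
    then obtain xs ys where "es = xs @ e # ys" by (meson split_list)
    with es e have "distinct (xs @ [e])" "residual_walk E f s t x (xs @ [e]) w"
      by (auto simp: residual_walk_append)
    then show ?thesis by blast
  next
    case False
    with es e have "distinct (es @ [e])" "residual_walk E f s t x (es @ [e]) w"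
      by (auto simp: residual_walk_append)
    then show ?thesis by blast
  qed
qed

lemma flux_augment:
  assumes "finite E" "\<forall>e\<in>E. f e \<in> {0, 1}" "distinct es" "residual_walk E f s t x es y"
  shows "flux E s t (augment es f) Y = flux E s t f Y + of_bool (x \<in> Y) - of_bool (y \<in> Y)"
proof -
  have es_E: "set es \<subseteq> E"
    using assms(4) by (rule residual_walk_edges_subset)
  have "flux E s t (augment es f) Y - flux E s t f Y
      = (\<Sum>e\<in>E. (of_bool (s e \<in> Y) - of_bool (t e \<in> Y)) * (augment es f e - f e))"
    using assms(1) by (simp add: flux_eq_sum_edges right_diff_distrib sum_subtractf)
  also have "\<dots> = (\<Sum>e\<in>set es. (of_bool (s e \<in> Y) - of_bool (t e \<in> Y)) * (augment es f e - f e))"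
    using assms(1) es_E by (intro sum.mono_neutral_right) (auto simp: augment_def)
  also have "\<dots> = (\<Sum>e\<in>set es. of_bool (residual_tail f s t e \<in> Y) - of_bool (residual_head f s t e \<in> Y))"
    using assms(2) es_E
    by (intro sum.cong) (auto simp: augment_def residual_tail_def residual_head_def)
  also have "\<dots> = of_bool (x \<in> Y) - of_bool (y \<in> Y)"
    using residual_walk_telescope[OF assms(4)] sum_list_distinct_conv_sum_set[OF assms(3)] by metis
  finally show ?thesis by linarith
qed

lemma augment_is_flow:
  assumes "finite E" "\<forall>e\<in>E. f e \<in> {0, 1}" "is_flow V E s t Bd (\<lambda>_. 1) f"
    and "distinct es" "residual_walk E f s t x es y" "x \<in> Bd" "y \<in> Bd"
  shows "is_flow V E s t Bd (\<lambda>_. 1) (augment es f)"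
  using assms flux_augment[OF assms(1,2,4,5)]
  by (auto simp: is_flow_iff_vertex_flux augment_def)

lemma flux_residual_closed_eq_cut_capacity:
  assumes "finite E" "\<forall>e\<in>E. f e \<in> {0, 1}"
    and "\<forall>e\<in>E. residual_tail f s t e \<in> U \<longrightarrow> residual_head f s t e \<in> U"
  shows "flux E s t f U = cut_capacity E s t (\<lambda>_. 1) U"
proof -
  have "(of_bool (s e \<in> U) - of_bool (t e \<in> U)) * f e = of_bool (s e \<in> U \<and> t e \<notin> U)"
    if "e \<in> E" for e
    using assms(2,3)[rule_format, OF that]
    by (cases "f e = 0") (auto simp: residual_tail_def residual_head_def)
  then show ?thesis
    using assms(1) by (simp add: flux_eq_sum_edges cut_capacity_eq_sum_edges)
qed

lemma ex_flux_maximal_unit_flow: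
  assumes "finite E"
  obtains f where "f \<in> E \<rightarrow>\<^sub>E {0, 1}" "is_flow V E s t Bd (\<lambda>_. 1) f"
    and "\<And>g. g \<in> E \<rightarrow>\<^sub>E {0, 1} \<Longrightarrow> is_flow V E s t Bd (\<lambda>_. 1) g \<Longrightarrow>
      flux E s t g X \<le> flux E s t f X"
proof -
  define F where "F = {f \<in> E \<rightarrow>\<^sub>E {0, 1}. is_flow V E s t Bd (\<lambda>_. 1) f}"
  have "finite F"
    unfolding F_def using assms by (simp add: finite_PiE)
  moreover have "(\<lambda>e\<in>E. 0) \<in> F"
    unfolding F_def is_flow_def by auto
  ultimately have "Max ((\<lambda>f. flux E s t f X) ` F) \<in> (\<lambda>f. flux E s t f X) ` F"
    by (intro Max_in) auto
  then obtain f where "f \<in> F" and f_Max: "flux E s t f X = Max ((\<lambda>f. flux E s t f X) ` F)"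
    by auto
  have "flux E s t g X \<le> flux E s t f X" if "g \<in> F" for g
    unfolding f_Max using \<open>finite F\<close> that by (intro Max_ge) auto
  with \<open>f \<in> F\<close> show ?thesis
    using that unfolding F_def by blast
qed

lemma unit_max_flux_eq_cut_capacity:
  assumes "finite V" "finite E" "\<forall>e\<in>E. s e \<in> V \<and> t e \<in> V" and "X \<subseteq> Bd"
  shows "\<exists>U. U \<inter> Bd = X \<and> max_flux V E s t Bd (\<lambda>_. 1) X = cut_capacity E s t (\<lambda>_. 1) U"
proof -
  obtain f where f_PiE: "f \<in> E \<rightarrow>\<^sub>E {0, 1}" and f_flow: "is_flow V E s t Bd (\<lambda>_. 1) f"
    and f_max: "\<And>g. g \<in> E \<rightarrow>\<^sub>E {0, 1} \<Longrightarrow> is_flow V E s t Bd (\<lambda>_. 1) g \<Longrightarrow>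
      flux E s t g X \<le> flux E s t f X"
    using ex_flux_maximal_unit_flow[OF assms(2)] by blast
  have f01: "\<forall>e\<in>E. f e \<in> {0, 1}"
    using f_PiE by auto
  define R where "R = {(residual_tail f s t e, residual_head f s t e) | e. e \<in> E}"
  define U where "U = R\<^sup>* `` X"
  have "y \<in> X" if y: "y \<in> U" "y \<in> Bd" for y
  proof (rule ccontr)
    assume "y \<notin> X"
    from y obtain x where "x \<in> X" "(x, y) \<in> R\<^sup>*"
      unfolding U_def by blast
    then obtain es where es: "distinct es" "residual_walk E f s t x es y"
      using rtrancl_residual_imp_distinct_walk[of x y f s t E] unfolding R_def by blast
    have "augment es f \<in> E \<rightarrow>\<^sub>E {0, 1}"
      using f_PiE residual_walk_edges_subset[OF es(2)]
      by (auto simp: augment_def PiE_iff extensional_def)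
    then have "flux E s t (augment es f) X \<le> flux E s t f X"
      using augment_is_flow[OF assms(2) f01 f_flow es] \<open>x \<in> X\<close> y assms(4) f_max by blast
    moreover have "flux E s t (augment es f) X = flux E s t f X + 1"
      using flux_augment[OF assms(2) f01 es] \<open>x \<in> X\<close> \<open>y \<notin> X\<close> by simp
    ultimately show False
      by linarith
  qed
  then have U_Bd: "U \<inter> Bd = X"
    using assms(4) by (auto simp: U_def)
  have U_closed: "\<forall>e\<in>E. residual_tail f s t e \<in> U \<longrightarrow> residual_head f s t e \<in> U"
    unfolding U_def R_def by (auto intro: rtrancl_into_rtrancl)
  have "cut_capacity E s t (\<lambda>_. 1) U = flux E s t f U"
    using flux_residual_closed_eq_cut_capacity[OF assms(2) f01 U_closed] ..
  also have "\<dots> = flux E s t f X"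
    using flow_flux_inter_boundary[OF assms(1-3) f_flow, of U] U_Bd by simp
  also have "\<dots> \<le> max_flux V E s t Bd (\<lambda>_. 1) X"
    using flow_flux_le_max_flux[OF assms(1-3) f_flow assms(4)] .
  finally have "cut_capacity E s t (\<lambda>_. 1) U \<le> max_flux V E s t Bd (\<lambda>_. 1) X" .
  moreover have "max_flux V E s t Bd (\<lambda>_. 1) X \<le> cut_capacity E s t (\<lambda>_. 1) U"
    by (rule max_flux_le_cut_capacity[OF assms(1-3) _ U_Bd]) simp
  ultimately show ?thesis
    using U_Bd by (intro exI[of _ U]) simp
qed

lemma crossing_count_three_sets:
  "of_bool (x \<in> U1 \<inter> U2 - U3 \<and> y \<notin> U1 \<inter> U2 - U3)
      + of_bool (x \<in> U1 \<inter> U3 - U2 \<and> y \<notin> U1 \<inter> U3 - U2)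
      + of_bool (x \<in> U2 \<inter> U3 - U1 \<and> y \<notin> U2 \<inter> U3 - U1)
      + of_bool (x \<in> U1 \<union> U2 \<union> U3 \<and> y \<notin> U1 \<union> U2 \<union> U3)
      + (of_bool (x \<in> U1 \<inter> U2 \<inter> U3) - of_bool (y \<in> U1 \<inter> U2 \<inter> U3))
    \<le> (of_bool (x \<in> U1 \<and> y \<notin> U1) + of_bool (x \<in> U2 \<and> y \<notin> U2)
      + of_bool (x \<in> U3 \<and> y \<notin> U3) :: real)"
  by (cases "x \<in> U1"; cases "x \<in> U2"; cases "x \<in> U3";
      cases "y \<in> U1"; cases "y \<in> U2"; cases "y \<in> U3") auto

lemma cut_capacity_three_sets_le:
  assumes "finite E" "\<forall>e\<in>E. 0 \<le> c e"
  shows "cut_capacity E s t c (U1 \<inter> U2 - U3) + cut_capacity E s t c (U1 \<inter> U3 - U2)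
      + cut_capacity E s t c (U2 \<inter> U3 - U1) + cut_capacity E s t c (U1 \<union> U2 \<union> U3)
      + flux E s t c (U1 \<inter> U2 \<inter> U3)
    \<le> cut_capacity E s t c U1 + cut_capacity E s t c U2 + cut_capacity E s t c U3"
  unfolding cut_capacity_eq_sum_edges[OF assms(1)] flux_eq_sum_edges[OF assms(1)]
    sum.distrib[symmetric] distrib_right[symmetric]
  using assms(2) by (intro sum_mono mult_right_mono crossing_count_three_sets) auto

lemma three_sets_inter_boundary:
  assumes "U1 \<inter> Bd = A \<union> B" "U2 \<inter> Bd = A \<union> C" "U3 \<inter> Bd = B \<union> C"
    and "A \<inter> B = {}" "A \<inter> C = {}" "B \<inter> C = {}"
  shows "(U1 \<inter> U2 - U3) \<inter> Bd = A" "(U1 \<inter> U3 - U2) \<inter> Bd = B" "(U2 \<inter> U3 - U1) \<inter> Bd = C"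
    and "(U1 \<union> U2 \<union> U3) \<inter> Bd = A \<union> B \<union> C" "(U1 \<inter> U2 \<inter> U3) \<inter> Bd = {}"
  using assms by blast+

theorem theorem5:
  fixes V :: "'v set" and E :: "'e set" and s t :: "'e \<Rightarrow> 'v"
    and Bd A B C D :: "'v set"
  assumes "finite V" and "finite E"
    and "\<forall>e\<in>E. s e \<in> V \<and> t e \<in> V"
    and "Bd \<subseteq> V"
    and "Bd = A \<union> B \<union> C \<union> D"
    and "A \<inter> B = {}" "A \<inter> C = {}" "A \<inter> D = {}"
    and "B \<inter> C = {}" "B \<inter> D = {}" "C \<inter> D = {}"
    and "inner_superbalanced V E s t Bd (\<lambda>_. 1)"
  shows "let S = max_flux V E s t Bd (\<lambda>_. 1) in
    S (A \<union> B) + S (A \<union> C) + S (B \<union> C) - S A - S B - S C - S (A \<union> B \<union> C) \<ge> 0"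
proof -
  note network = assms(1-3)
  let ?S = "max_flux V E s t Bd (\<lambda>_. 1)" and ?cut = "cut_capacity E s t (\<lambda>_. 1)"
  have "A \<union> B \<subseteq> Bd" "A \<union> C \<subseteq> Bd" "B \<union> C \<subseteq> Bd"
    using assms(5) by blast+
  then obtain U1 U2 U3 where
      U1: "U1 \<inter> Bd = A \<union> B" "?S (A \<union> B) = ?cut U1"
    and U2: "U2 \<inter> Bd = A \<union> C" "?S (A \<union> C) = ?cut U2"
    and U3: "U3 \<inter> Bd = B \<union> C" "?S (B \<union> C) = ?cut U3"
    using unit_max_flux_eq_cut_capacity[OF network] by metis
  note traces = three_sets_inter_boundary[OF U1(1) U2(1) U3(1) assms(6,7,9)]
  have S_le_cut: "?S X \<le> ?cut U" if "U \<inter> Bd = X" for U X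
    using max_flux_le_cut_capacity[OF network _ that] by simp
  have "?S A \<le> ?cut (U1 \<inter> U2 - U3)" "?S B \<le> ?cut (U1 \<inter> U3 - U2)"
      "?S C \<le> ?cut (U2 \<inter> U3 - U1)" "?S (A \<union> B \<union> C) \<le> ?cut (U1 \<union> U2 \<union> U3)"
    using S_le_cut[OF traces(1)] S_le_cut[OF traces(2)] S_le_cut[OF traces(3)]
      S_le_cut[OF traces(4)] .
  moreover have "0 \<le> flux E s t (\<lambda>_. 1) (U1 \<inter> U2 \<inter> U3)"
    using inner_superbalanced_flux_nonneg[OF network assms(12) traces(5)] .
  ultimately show ?thesis
    using cut_capacity_three_sets_le[OF assms(2), of "\<lambda>_. 1" s t U1 U2 U3] U1(2) U2(2) U3(2)
    by (simp add: Let_def)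
qed

end
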